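(* Assume there exists a decomposition of $V$ which is split with respect to the orderings $E_0,\ldots,E_d$ and $E^*_0,\ldots,E^*_d$. Then $A,A^*$ is a Leonard pair if and only if $(A;A^*;\{E_i\}_{i=0}^d;\{E^*_i\}_{i=0}^d)$ is a Leonard system.
   Context: Let $\mathbb K$ be a field, $d\ge 0$ an integer, and $\mathcal A$ a $\mathbb K$-algebra isomorphic to $\mathrm{Mat}_{d+1}(\mathbb K)$, with identity $I$. An element of $\mathcal A$ is multiplicity-free if it has $d+1$ mutually distinct eigenvalues, all in $\mathbb K$; for such $A$ with eigenvalues $\theta_0,\ldots,\theta_d$, the primitive idempotent associated with $\theta_i$ is $E_i=\prod_{j\ne i}(A-\theta_jI)/(\theta_i-\theta_j)$. Standing setup: $A,A^*$ are multiplicity-free elements of $\mathcal A$ ($A^*$ is just a name, not an adjoint); $E_0,\ldots,E_d$ is an ordering of the primitive idempotents of $A$ and $\theta_i$ is the eigenvalue of $A$ for $E_i$; $E^*_0,\ldots,E^*_d$ is an ordering of the primitive idempotents of $A^*$ and $\theta^*_i$ is the eigenvalue of $A^*$ for $E^*_i$; $V$ is an irreducible left $\mathcal A$-module. A decomposition of $V$ is a sequence $U_0,\ldots,U_d$ of 1-dimensional subspaces with $V=U_0+\cdots+U_d$ (direct sum); it is split (with respect to the orderings $E_0,\ldots,E_d$ and $E^*_0,\ldots,E^*_d$) if $(A-\theta_iI)U_i=U_{i+1}$ for $0\le i\le d-1$, $(A-\theta_dI)U_d=0$, $(A^*-\theta^*_iI)U_i=U_{i-1}$ for $1\le i\le d$,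 and $(A^*-\theta^*_0I)U_0=0$. A square matrix is tridiagonal if every nonzero entry lies on the diagonal, subdiagonal or superdiagonal, and irreducible tridiagonal if moreover all sub- and superdiagonal entries are nonzero. $A,A^*$ is a Leonard pair if there is a basis of $V$ in which $A$ is irreducible tridiagonal and $A^*$ diagonal, and a basis of $V$ in which $A^*$ is irreducible tridiagonal and $A$ diagonal. The sequence $(A;A^*;\{E_i\};\{E^*_i\})$ is a Leonard system if for all $0\le i,j\le d$: $E^*_iAE^*_j=0$ if $|i-j|>1$, $E^*_iAE^*_j\ne0$ if $|i-j|=1$, $E_iA^*E_j=0$ if $|i-j|>1$, and $E_iA^*E_j\ne0$ if $|i-j|=1$. *)

theory Defs
  imports "Jordan_Normal_Form.Matrix" "Jordan_Normal_Form.Char_Poly"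
begin

text \<open>Concrete model: the algebra is Mat_(d+1)(K) (matrices of carrier_mat (d+1) (d+1)),
  and V is the irreducible module carrier_vec (d+1) of column vectors.\<close>

definition mult_free :: "nat \<Rightarrow> 'a::field mat \<Rightarrow> bool" where
  "mult_free d A \<longleftrightarrow> (\<exists>\<theta>. inj_on \<theta> {..d} \<and> (\<forall>i\<le>d. eigenvalue A (\<theta> i)))"

definition prim_idem :: "nat \<Rightarrow> 'a::field mat \<Rightarrow> (nat \<Rightarrow> 'a) \<Rightarrow> nat \<Rightarrow> 'a mat" where
  "prim_idem d A \<theta> i =
     foldr (\<lambda>j M. ((1 / (\<theta> i - \<theta> j)) \<cdot>\<^sub>m (A - \<theta> j \<cdot>\<^sub>m 1\<^sub>m (Suc d))) * M)
           (filter (\<lambda>j. j \<noteq> i) [0..<Suc d]) (1\<^sub>m (Suc d))"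

definition is_decomposition :: "nat \<Rightarrow> (nat \<Rightarrow> 'a::field vec set) \<Rightarrow> bool" where
  "is_decomposition d U \<longleftrightarrow>
     (\<forall>i\<le>d. \<exists>u. u \<in> carrier_vec (Suc d) \<and> u \<noteq> 0\<^sub>v (Suc d) \<and> U i = {c \<cdot>\<^sub>v u | c. True}) \<and>
     (\<forall>v \<in> carrier_vec (Suc d). \<exists>!x. (\<forall>i. i > d \<longrightarrow> x i = 0\<^sub>v (Suc d)) \<and>
          (\<forall>i\<le>d. x i \<in> U i) \<and> v = finsum_vec TYPE('a) (Suc d) x {0..d})"

definition split_decomposition ::
  "nat \<Rightarrow> 'a::field mat \<Rightarrow> 'a mat \<Rightarrow> (nat \<Rightarrow> 'a) \<Rightarrow> (nat \<Rightarrow> 'a) \<Rightarrow> (nat \<Rightarrow> 'a vec set) \<Rightarrow> bool" where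
  "split_decomposition d A As \<theta> \<theta>s U \<longleftrightarrow> is_decomposition d U \<and>
     (\<forall>i<d. (\<lambda>v. (A - \<theta> i \<cdot>\<^sub>m 1\<^sub>m (Suc d)) *\<^sub>v v) ` U i = U (Suc i)) \<and>
     (\<lambda>v. (A - \<theta> d \<cdot>\<^sub>m 1\<^sub>m (Suc d)) *\<^sub>v v) ` U d = {0\<^sub>v (Suc d)} \<and>
     (\<forall>i. 1 \<le> i \<and> i \<le> d \<longrightarrow> (\<lambda>v. (As - \<theta>s i \<cdot>\<^sub>m 1\<^sub>m (Suc d)) *\<^sub>v v) ` U i = U (i - 1)) \<and>
     (\<lambda>v. (As - \<theta>s 0 \<cdot>\<^sub>m 1\<^sub>m (Suc d)) *\<^sub>v v) ` U 0 = {0\<^sub>v (Suc d)}"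

definition tridiagonal :: "'a::zero mat \<Rightarrow> bool" where
  "tridiagonal M \<longleftrightarrow> (\<forall>i<dim_row M. \<forall>j<dim_col M. (i > j + 1 \<or> j > i + 1) \<longrightarrow> M $$ (i,j) = 0)"

definition irred_tridiagonal :: "'a::zero mat \<Rightarrow> bool" where
  "irred_tridiagonal M \<longleftrightarrow> tridiagonal M \<and>
     (\<forall>i. i + 1 < dim_row M \<longrightarrow> M $$ (i+1, i) \<noteq> 0 \<and> M $$ (i, i+1) \<noteq> 0)"

text \<open>Matrix of A w.r.t. the basis formed by the columns of an invertible P is Q * A * P, Q = P^-1.\<close>
definition leonard_pair :: "nat \<Rightarrow> 'a::field mat \<Rightarrow> 'a mat \<Rightarrow> bool" where
  "leonard_pair d A As \<longleftrightarrow>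
     (\<exists>P Q. P \<in> carrier_mat (Suc d) (Suc d) \<and> Q \<in> carrier_mat (Suc d) (Suc d) \<and>
        P * Q = 1\<^sub>m (Suc d) \<and> Q * P = 1\<^sub>m (Suc d) \<and>
        irred_tridiagonal (Q * A * P) \<and> diagonal_mat (Q * As * P)) \<and>
     (\<exists>P Q. P \<in> carrier_mat (Suc d) (Suc d) \<and> Q \<in> carrier_mat (Suc d) (Suc d) \<and>
        P * Q = 1\<^sub>m (Suc d) \<and> Q * P = 1\<^sub>m (Suc d) \<and>
        irred_tridiagonal (Q * As * P) \<and> diagonal_mat (Q * A * P))"

definition leonard_system ::
  "nat \<Rightarrow> 'a::field mat \<Rightarrow> 'a mat \<Rightarrow> (nat \<Rightarrow> 'a mat) \<Rightarrow> (nat \<Rightarrow> 'a mat) \<Rightarrow> bool" where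
  "leonard_system d A As E Es \<longleftrightarrow>
     (\<forall>i\<le>d. \<forall>j\<le>d.
        ((i > j + 1 \<or> j > i + 1) \<longrightarrow> Es i * A * Es j = 0\<^sub>m (Suc d) (Suc d)) \<and>
        ((i = j + 1 \<or> j = i + 1) \<longrightarrow> Es i * A * Es j \<noteq> 0\<^sub>m (Suc d) (Suc d)) \<and>
        ((i > j + 1 \<or> j > i + 1) \<longrightarrow> E i * As * E j = 0\<^sub>m (Suc d) (Suc d)) \<and>
        ((i = j + 1 \<or> j = i + 1) \<longrightarrow> E i * As * E j \<noteq> 0\<^sub>m (Suc d) (Suc d)))"

end

theory Submission
  imports Defs
begin

text \<open>
  In an eigenbasis of \<open>A*\<close> ordered by \<open>\<theta>*\<^sub>0, ..., \<theta>*\<^sub>d\<close> the idempotent \<open>E*\<^sub>i\<close> is represented by the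
  diagonal matrix unit \<open>e\<^sub>i\<^sub>i\<close>, so \<open>E*\<^sub>i A E*\<^sub>j = 0\<close> exactly when the \<open>(i,j)\<close> entry of \<open>A\<close> in that basis
  vanishes: the Leonard system conditions on \<open>A\<close> say that \<open>A\<close> is irreducible tridiagonal in this
  eigenbasis of \<open>A*\<close>, and dually for \<open>A*\<close>.  This gives one direction.

  Conversely, a basis in which \<open>A*\<close> is diagonal and \<open>A\<close> irreducible tridiagonal is an eigenbasis
  of \<open>A*\<close> listed in some order \<open>\<sigma>\<close>, and the split decomposition forces \<open>\<sigma>\<close> to be the identity
  or the reversal, both of which preserve tridiagonal patterns.  Indeed, if \<open>u\<^sub>i\<close> spans \<open>U\<^sub>i\<close>, then
  \<open>u\<^sub>i\<close> lies in \<open>E*\<^sub>0V + ... + E*\<^sub>iV\<close>, i.e. its coordinates are supported on \<open>\<sigma>{0..i}\<close>, while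
  \<open>u\<^sub>i\<^sub>+\<^sub>1\<close> is a nonzero multiple of \<open>(A - \<theta>\<^sub>i) u\<^sub>i\<close>.  An irreducible tridiagonal matrix creates
  nonzero coordinates next to both ends of the support, so \<open>\<sigma> 0\<close> must be an end point and
  \<open>\<sigma>(i+1)\<close> the neighbour of \<open>\<sigma> i\<close> towards the other end.  The statement for \<open>A*\<close> follows from the
  same argument applied to the split decomposition \<open>U\<^sub>d, ..., U\<^sub>0\<close> of the pair \<open>(A*, A)\<close>.
\<close>

definition inverse_mats :: "nat \<Rightarrow> 'a::semiring_1 mat \<Rightarrow> 'a mat \<Rightarrow> bool" where
  "inverse_mats n P Q \<longleftrightarrow>
     P \<in> carrier_mat n n \<and> Q \<in> carrier_mat n n \<and> P * Q = 1\<^sub>m n \<and> Q * P = 1\<^sub>m n"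

definition diag_unit :: "nat \<Rightarrow> nat \<Rightarrow> 'a::{zero,one} mat" where
  "diag_unit n i = mat_diag n (\<lambda>k. if k = i then 1 else 0)"

lemma assoc_mult_mat_sq:
  "A \<in> carrier_mat n n \<Longrightarrow> B \<in> carrier_mat n n \<Longrightarrow> C \<in> carrier_mat n n \<Longrightarrow> A * B * C = A * (B * C)"
  by (rule assoc_mult_mat)

lemma smult_one_mult_vec:
  fixes v :: "'a::comm_ring_1 vec"
  shows "v \<in> carrier_vec n \<Longrightarrow> (t \<cdot>\<^sub>m 1\<^sub>m n) *\<^sub>v v = t \<cdot>\<^sub>v v"
  by (intro eq_vecI) (auto simp: scalar_prod_def if_distrib if_distribR sum.delta cong: if_cong)

lemma smult_mat_mult_vec:
  fixes A :: "'a::comm_ring_1 mat"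
  shows "A \<in> carrier_mat nr nc \<Longrightarrow> v \<in> carrier_vec nc \<Longrightarrow> (k \<cdot>\<^sub>m A) *\<^sub>v v = k \<cdot>\<^sub>v (A *\<^sub>v v)"
  by (intro eq_vecI) (auto simp: scalar_prod_def sum_distrib_left mult.assoc)

lemma shift_mult_vec:
  fixes T :: "'a::comm_ring_1 mat"
  assumes "T \<in> carrier_mat n n" and "v \<in> carrier_vec n"
  shows "(T - t \<cdot>\<^sub>m 1\<^sub>m n) *\<^sub>v v = T *\<^sub>v v - t \<cdot>\<^sub>v v"
  using assms by (simp add: minus_mult_distrib_mat_vec[of _ n n] smult_one_mult_vec)

lemma shift_mult_vec_carrier: "(T - t \<cdot>\<^sub>m 1\<^sub>m n) *\<^sub>v v \<in> carrier_vec n"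
  by (rule carrier_vecI) simp

lemma shift_mult_eigenvector:
  fixes N :: "'a::comm_ring_1 mat"
  assumes "N \<in> carrier_mat n n" and "w \<in> carrier_vec n" and "N *\<^sub>v w = \<mu> \<cdot>\<^sub>v w"
  shows "(N - t \<cdot>\<^sub>m 1\<^sub>m n) *\<^sub>v w = (\<mu> - t) \<cdot>\<^sub>v w"
  using assms by (intro eq_vecI) (auto simp: shift_mult_vec left_diff_distrib)

lemma mat_diag_mult_vec_index:
  fixes v :: "'a::comm_ring_1 vec"
  assumes "v \<in> carrier_vec n" and "k < n"
  shows "(mat_diag n f *\<^sub>v v) $ k = f k * v $ k"
  using assms by (simp add: mat_diag_def scalar_prod_def if_distrib if_distribR sum.delta cong: if_cong)

lemma mat_diag_shift:
  fixes f :: "nat \<Rightarrow> 'a::comm_ring_1"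
  shows "mat_diag n f - t \<cdot>\<^sub>m 1\<^sub>m n = mat_diag n (\<lambda>k. f k - t)"
  by (intro eq_matI) (auto simp: mat_diag_def)

lemma mult_mat_vec_zero: "A \<in> carrier_mat nr n \<Longrightarrow> A *\<^sub>v 0\<^sub>v n = 0\<^sub>v nr"
  by (intro eq_vecI) auto

lemma diag_unit_mult_vec:
  fixes W :: "'a::comm_ring_1 mat"
  assumes W: "W \<in> carrier_mat n n" and v: "v \<in> carrier_vec n" and i: "i < n"
  shows "(W * diag_unit n i) *\<^sub>v v = v $ i \<cdot>\<^sub>v col W i"
  unfolding diag_unit_def mat_diag_mult_right[OF W]
  using W v i by (intro eq_vecI) (auto simp: scalar_prod_def if_distrib if_distribR sum.delta cong: if_cong)

lemma smult_vec_zero_left: "v \<in> carrier_vec n \<Longrightarrow> (0::'a::semiring_0) \<cdot>\<^sub>v v = 0\<^sub>v n"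
  by (intro eq_vecI) auto

lemma nonzero_vec_index:
  assumes "v \<in> carrier_vec n" and "v \<noteq> 0\<^sub>v n"
  obtains k where "k < n" and "v $ k \<noteq> 0"
  using assms by (metis carrier_vecD eq_vecI index_zero_vec(1,2))

lemma shift_mult_vec_index_single:
  fixes T :: "'a::comm_ring_1 mat"
  assumes T: "T \<in> carrier_mat n n" and y: "y \<in> carrier_vec n" and k: "k < n" and a: "a < n"
    and yk: "y $ k = 0" and single: "\<forall>l<n. l \<noteq> a \<longrightarrow> T $$ (k,l) * y $ l = 0"
  shows "((T - t \<cdot>\<^sub>m 1\<^sub>m n) *\<^sub>v y) $ k = T $$ (k,a) * y $ a"
proof -
  have "(T *\<^sub>v y) $ k = (\<Sum>l\<in>{..<n}. T $$ (k,l) * y $ l)"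
    using T y k by (simp add: scalar_prod_def atLeast0LessThan)
  also have "\<dots> = T $$ (k,a) * y $ a"
    using single a by (subst sum.remove[of _ a]) (auto intro!: sum.neutral)
  finally show ?thesis
    using T y k yk by (simp add: shift_mult_vec)
qed

lemma inverse_mats_mult_vec_eq_0:
  assumes PQ: "inverse_mats n P Q" and v: "v \<in> carrier_vec n" and Qv: "Q *\<^sub>v v = 0\<^sub>v n"
  shows "v = 0\<^sub>v n"
proof -
  have P: "P \<in> carrier_mat n n" and Q: "Q \<in> carrier_mat n n" and "P * Q = 1\<^sub>m n"
    using PQ unfolding inverse_mats_def by auto
  then have "v = P *\<^sub>v (Q *\<^sub>v v)" using v by (simp flip: assoc_mult_mat_vec)
  also have "\<dots> = 0\<^sub>v n" using P Qv by (simp add: mult_mat_vec_zero)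
  finally show ?thesis .
qed

lemma inverse_mats_conj_mult_vec:
  fixes M :: "'a::comm_ring_1 mat"
  assumes PQ: "inverse_mats n P Q" and M: "M \<in> carrier_mat n n" and v: "v \<in> carrier_vec n"
  shows "Q *\<^sub>v (M *\<^sub>v v) = (Q * M * P) *\<^sub>v (Q *\<^sub>v v)"
proof -
  have P: "P \<in> carrier_mat n n" and Q: "Q \<in> carrier_mat n n" and "P * Q = 1\<^sub>m n"
    using PQ unfolding inverse_mats_def by auto
  then have "P *\<^sub>v (Q *\<^sub>v v) = v" using v by (simp flip: assoc_mult_mat_vec)
  moreover have "(Q * M * P) *\<^sub>v (Q *\<^sub>v v) = Q *\<^sub>v (M *\<^sub>v (P *\<^sub>v (Q *\<^sub>v v)))"
    using P Q M v by (simp add: assoc_mult_mat_vec[of _ n n _ n])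
  ultimately show ?thesis by simp
qed

lemma inverse_mats_conj_shift:
  fixes M :: "'a::comm_ring_1 mat"
  assumes PQ: "inverse_mats n P Q" and M: "M \<in> carrier_mat n n"
  shows "Q * (M - t \<cdot>\<^sub>m 1\<^sub>m n) * P = Q * M * P - t \<cdot>\<^sub>m 1\<^sub>m n"
proof -
  have P: "P \<in> carrier_mat n n" and Q: "Q \<in> carrier_mat n n" and "Q * P = 1\<^sub>m n"
    using PQ unfolding inverse_mats_def by auto
  then have "Q * (t \<cdot>\<^sub>m 1\<^sub>m n) * P = t \<cdot>\<^sub>m 1\<^sub>m n"
    using mult_smult_distrib[OF Q one_carrier_mat, of t] mult_smult_assoc_mat[OF Q P, of t] by simp
  then show ?thesis
    using P Q M by (simp add: mult_minus_distrib_mat[of _ n n] minus_mult_distrib_mat[of _ n n])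
qed

lemma inverse_mats_conj_shift_mult_vec:
  fixes M :: "'a::comm_ring_1 mat"
  assumes PQ: "inverse_mats n P Q" and M: "M \<in> carrier_mat n n" and v: "v \<in> carrier_vec n"
  shows "Q *\<^sub>v ((M - t \<cdot>\<^sub>m 1\<^sub>m n) *\<^sub>v v) = (Q * M * P - t \<cdot>\<^sub>m 1\<^sub>m n) *\<^sub>v (Q *\<^sub>v v)"
proof -
  have "M - t \<cdot>\<^sub>m 1\<^sub>m n \<in> carrier_mat n n" by (simp add: minus_carrier_mat)
  from inverse_mats_conj_mult_vec[OF PQ this v] show ?thesis
    by (simp only: inverse_mats_conj_shift[OF PQ M])
qed

lemma inj_on_reverse:
  fixes d :: nat
  assumes "inj_on \<theta> {..d}"
  shows "inj_on (\<lambda>j. \<theta> (d - j)) {..d}"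
proof (rule inj_onI)
  fix x y assume "x \<in> {..d}" "y \<in> {..d}" and eq: "\<theta> (d - x) = \<theta> (d - y)"
  have "d - x \<in> {..d}" "d - y \<in> {..d}" by auto
  with inj_onD[OF assms eq] have "d - x = d - y" by blast
  then show "x = y" using \<open>x \<in> {..d}\<close> \<open>y \<in> {..d}\<close> by simp
qed

section \<open>Primitive idempotents in an eigenbasis\<close>

lemma prim_idem_foldr_carrier:
  "N \<in> carrier_mat n n \<Longrightarrow> foldr (\<lambda>j M. (s j \<cdot>\<^sub>m (N - t j \<cdot>\<^sub>m 1\<^sub>m n)) * M) L (1\<^sub>m n) \<in> carrier_mat n n"
  by (induction L) (auto simp: minus_carrier_mat)

lemma prim_idem_carrier:
  "N \<in> carrier_mat (Suc d) (Suc d) \<Longrightarrow> prim_idem d N \<theta> i \<in> carrier_mat (Suc d) (Suc d)"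
  unfolding prim_idem_def by (rule prim_idem_foldr_carrier)

lemma prim_idem_foldr_mult_eigenvector:
  fixes N :: "'a::field mat"
  assumes N: "N \<in> carrier_mat n n" and w: "w \<in> carrier_vec n" and ev: "N *\<^sub>v w = \<mu> \<cdot>\<^sub>v w"
  shows "foldr (\<lambda>j M. (s j \<cdot>\<^sub>m (N - t j \<cdot>\<^sub>m 1\<^sub>m n)) * M) L (1\<^sub>m n) *\<^sub>v w
    = prod_list (map (\<lambda>j. s j * (\<mu> - t j)) L) \<cdot>\<^sub>v w"
proof (induction L)
  case Nil
  show ?case using w by simp
next
  case (Cons j L)
  let ?F = "foldr (\<lambda>j M. (s j \<cdot>\<^sub>m (N - t j \<cdot>\<^sub>m 1\<^sub>m n)) * M) L (1\<^sub>m n)"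
  let ?S = "s j \<cdot>\<^sub>m (N - t j \<cdot>\<^sub>m 1\<^sub>m n)"
  have S: "?S \<in> carrier_mat n n" by (simp add: minus_carrier_mat)
  have "?S *\<^sub>v w = (s j * (\<mu> - t j)) \<cdot>\<^sub>v w"
    using N w ev by (simp add: smult_mat_mult_vec[of _ n n] minus_carrier_mat shift_mult_eigenvector
        smult_smult_assoc)
  moreover have "(?S * ?F) *\<^sub>v w = ?S *\<^sub>v (?F *\<^sub>v w)"
    using assoc_mult_mat_vec[OF S prim_idem_foldr_carrier[OF N] w] .
  ultimately show ?case
    using Cons S w by (simp add: mult_mat_vec smult_smult_assoc mult.commute)
qed

lemma prim_idem_mult_eigenvector:
  fixes N :: "'a::field mat"
  assumes N: "N \<in> carrier_mat (Suc d) (Suc d)" and \<theta>: "inj_on \<theta> {..d}" and j: "j \<le> d"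
    and w: "w \<in> carrier_vec (Suc d)" and ev: "N *\<^sub>v w = \<theta> j \<cdot>\<^sub>v w"
  shows "prim_idem d N \<theta> i *\<^sub>v w = (if i = j then w else 0\<^sub>v (Suc d))"
proof -
  let ?L = "filter (\<lambda>l. l \<noteq> i) [0..<Suc d]"
  let ?f = "\<lambda>l. 1 / (\<theta> i - \<theta> l) * (\<theta> j - \<theta> l)"
  have "prim_idem d N \<theta> i *\<^sub>v w = prod_list (map ?f ?L) \<cdot>\<^sub>v w"
    unfolding prim_idem_def by (rule prim_idem_foldr_mult_eigenvector[OF N w ev])
  moreover have "prod_list (map ?f ?L) = (if i = j then 1 else 0)"
  proof (cases "i = j")
    case True
    have "?f l = 1" if "l \<in> set ?L" for l
      using that True j inj_onD[OF \<theta>, of i l] by (auto simp del: upt_Suc)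
    then have "map ?f ?L = map (\<lambda>_. 1) ?L" by (intro map_cong) auto
    then show ?thesis using True by (simp add: prod_list_replicate map_replicate_const)
  next
    case False
    then have "j \<in> set ?L" using j by auto
    then show ?thesis using False by (force simp: prod_list_zero_iff)
  qed
  ultimately show ?thesis using w by (auto intro!: eq_vecI)
qed

lemma prim_idem_mult_eigenbasis:
  fixes N P :: "'a::field mat"
  assumes N: "N \<in> carrier_mat (Suc d) (Suc d)" and P: "P \<in> carrier_mat (Suc d) (Suc d)"
    and \<theta>: "inj_on \<theta> {..d}" and \<sigma>: "bij_betw \<sigma> {..d} {..d}"
    and NP: "N * P = P * mat_diag (Suc d) \<eta>" and \<eta>: "\<forall>j\<le>d. \<eta> (\<sigma> j) = \<theta> j" and i: "i \<le> d"
  shows "prim_idem d N \<theta> i * P = P * diag_unit (Suc d) (\<sigma> i)"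
proof (rule eq_matI)
  fix k l assume "k < dim_row (P * diag_unit (Suc d) (\<sigma> i))" "l < dim_col (P * diag_unit (Suc d) (\<sigma> i))"
  then have k: "k < Suc d" and l: "l < Suc d" using P by (auto simp: diag_unit_def mat_diag_def)
  then obtain j where j: "j \<le> d" "l = \<sigma> j" using \<sigma> unfolding bij_betw_def by force
  have "N *\<^sub>v col P l = col (P * mat_diag (Suc d) \<eta>) l" using col_mult2[OF N P l] NP by simp
  also have "\<dots> = \<theta> j \<cdot>\<^sub>v col P l" using P l j \<eta> by (auto simp: mat_diag_mult_right[OF P])
  finally have ev: "N *\<^sub>v col P l = \<theta> j \<cdot>\<^sub>v col P l" .
  have "i = j \<longleftrightarrow> \<sigma> i = l" using j i bij_betw_imp_inj_on[OF \<sigma>] by (auto dest: inj_onD)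
  then have "(prim_idem d N \<theta> i *\<^sub>v col P l) $ k = (P * diag_unit (Suc d) (\<sigma> i)) $$ (k,l)"
    using prim_idem_mult_eigenvector[OF N \<theta> j(1) _ ev] P k l
    by (simp add: diag_unit_def mat_diag_mult_right[OF P])
  then show "(prim_idem d N \<theta> i * P) $$ (k,l) = (P * diag_unit (Suc d) (\<sigma> i)) $$ (k,l)"
    using prim_idem_carrier[OF N, of \<theta> i] P k l by simp
qed (use prim_idem_carrier[OF N] P in \<open>auto simp: diag_unit_def mat_diag_def\<close>)

lemma det_eigenvector_columns_nonzero:
  fixes N W :: "'a::field mat"
  assumes N: "N \<in> carrier_mat (Suc d) (Suc d)" and W: "W \<in> carrier_mat (Suc d) (Suc d)"
    and \<theta>: "inj_on \<theta> {..d}" and NW: "N * W = W * mat_diag (Suc d) \<theta>"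
    and col: "\<forall>i\<le>d. col W i \<noteq> 0\<^sub>v (Suc d)"
  shows "det W \<noteq> 0"
proof
  assume "det W = 0"
  then obtain v where v: "v \<in> carrier_vec (Suc d)" "v \<noteq> 0\<^sub>v (Suc d)" "W *\<^sub>v v = 0\<^sub>v (Suc d)"
    using det_0_iff_vec_prod_zero[OF W] by auto
  have "v $ i = 0" if i: "i < Suc d" for i
  proof -
    have "(W * diag_unit (Suc d) i) *\<^sub>v v = (prim_idem d N \<theta> i * W) *\<^sub>v v"
      using prim_idem_mult_eigenbasis[OF N W \<theta> bij_betw_id NW] i by simp
    also have "\<dots> = prim_idem d N \<theta> i *\<^sub>v (W *\<^sub>v v)"
      using assoc_mult_mat_vec[OF prim_idem_carrier[OF N] W v(1)] .
    also have "\<dots> = 0\<^sub>v (Suc d)"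
      using v(3) prim_idem_carrier[OF N] by (simp add: mult_mat_vec_zero)
    finally have vw: "v $ i \<cdot>\<^sub>v col W i = 0\<^sub>v (Suc d)"
      using diag_unit_mult_vec[OF W v(1) i] by simp
    have "col W i \<in> carrier_vec (Suc d)" using W by (intro carrier_vecI) simp
    moreover have "col W i \<noteq> 0\<^sub>v (Suc d)" using col i by simp
    ultimately obtain k where k: "k < Suc d" "col W i $ k \<noteq> 0" by (rule nonzero_vec_index)
    have "v $ i * col W i $ k = 0" using arg_cong[OF vw, of "\<lambda>x. x $ k"] k W by simp
    then show ?thesis using k by simp
  qed
  then have "v = 0\<^sub>v (Suc d)" using v(1) by (intro eq_vecI) auto
  then show False using v(2) by contradiction
qed

lemma eigenbasis_exists:
  fixes N :: "'a::field mat"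
  assumes N: "N \<in> carrier_mat (Suc d) (Suc d)" and \<theta>: "inj_on \<theta> {..d}"
    and ev: "\<forall>i\<le>d. eigenvalue N (\<theta> i)"
  obtains W Wi where "inverse_mats (Suc d) W Wi" and "N * W = W * mat_diag (Suc d) \<theta>"
    and "\<forall>i\<le>d. prim_idem d N \<theta> i = W * diag_unit (Suc d) i * Wi"
proof -
  obtain w where w: "\<forall>i\<le>d. eigenvector N (w i) (\<theta> i)"
    using ev unfolding eigenvalue_def by metis
  then have wc: "w i \<in> carrier_vec (Suc d)" "w i \<noteq> 0\<^sub>v (Suc d)" "N *\<^sub>v w i = \<theta> i \<cdot>\<^sub>v w i"
    if "i \<le> d" for i
    using that N unfolding eigenvector_def by auto
  define W where "W = mat (Suc d) (Suc d) (\<lambda>(k,j). w j $ k)"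
  have W: "W \<in> carrier_mat (Suc d) (Suc d)" by (simp add: W_def)
  have col: "col W j = w j" if "j < Suc d" for j
    using wc[of j] that by (intro eq_vecI) (auto simp: W_def)
  have NW: "N * W = W * mat_diag (Suc d) \<theta>"
  proof (rule eq_matI)
    fix k j assume "k < dim_row (W * mat_diag (Suc d) \<theta>)" "j < dim_col (W * mat_diag (Suc d) \<theta>)"
    then have k: "k < Suc d" and j: "j < Suc d" using W by (auto simp: mat_diag_def)
    have "(N * W) $$ (k,j) = (N *\<^sub>v w j) $ k" using N W k j col[OF j] by simp
    moreover have "(W * mat_diag (Suc d) \<theta>) $$ (k,j) = w j $ k * \<theta> j"
      using k j by (simp add: mat_diag_mult_right[OF W]) (simp add: W_def)
    ultimately show "(N * W) $$ (k,j) = (W * mat_diag (Suc d) \<theta>) $$ (k,j)"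
      using wc[of j] k j by simp
  qed (use N W in \<open>auto simp: mat_diag_def\<close>)
  have "det W \<noteq> 0"
    using det_eigenvector_columns_nonzero[OF N W \<theta> NW] col wc(2) by simp
  then obtain Wi where Wi: "Wi \<in> carrier_mat (Suc d) (Suc d)" "Wi * W = 1\<^sub>m (Suc d)" "W * Wi = 1\<^sub>m (Suc d)"
    using det_non_zero_imp_unit[OF W, of "()"] unfolding Units_def ring_mat_def by auto
  have "prim_idem d N \<theta> i = W * diag_unit (Suc d) i * Wi" if "i \<le> d" for i
  proof -
    have "prim_idem d N \<theta> i = prim_idem d N \<theta> i * W * Wi"
      using Wi W prim_idem_carrier[OF N, of \<theta> i] by (simp add: assoc_mult_mat_sq)
    then show ?thesis using prim_idem_mult_eigenbasis[OF N W \<theta> bij_betw_id NW] that by simp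
  qed
  then show thesis using that W Wi NW unfolding inverse_mats_def by blast
qed

lemma prim_idem_reverse:
  fixes N :: "'a::field mat"
  assumes N: "N \<in> carrier_mat (Suc d) (Suc d)" and \<theta>: "inj_on \<theta> {..d}"
    and ev: "\<forall>i\<le>d. eigenvalue N (\<theta> i)" and i: "i \<le> d"
  shows "prim_idem d N (\<lambda>j. \<theta> (d - j)) i = prim_idem d N \<theta> (d - i)"
proof -
  obtain W Wi where WWi: "inverse_mats (Suc d) W Wi" and NW: "N * W = W * mat_diag (Suc d) \<theta>"
    and E: "\<forall>i\<le>d. prim_idem d N \<theta> i = W * diag_unit (Suc d) i * Wi"
    using eigenbasis_exists[OF N \<theta> ev] by blast
  have W: "W \<in> carrier_mat (Suc d) (Suc d)" and Wi: "Wi \<in> carrier_mat (Suc d) (Suc d)"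
    and "W * Wi = 1\<^sub>m (Suc d)" using WWi unfolding inverse_mats_def by auto
  have rev: "bij_betw (\<lambda>j. d - j) {..d} {..d}"
    by (rule bij_betw_byWitness[where f'="\<lambda>j. d - j"]) auto
  have \<theta>': "inj_on (\<lambda>j. \<theta> (d - j)) {..d}" using inj_on_reverse[OF \<theta>] .
  let ?E = "prim_idem d N (\<lambda>j. \<theta> (d - j)) i"
  have E': "?E \<in> carrier_mat (Suc d) (Suc d)" by (rule prim_idem_carrier[OF N])
  from prim_idem_mult_eigenbasis[OF N W \<theta>' rev NW _ i]
  have "?E * W = W * diag_unit (Suc d) (d - i)" by simp
  moreover have "?E = ?E * W * Wi"
    using E' W Wi \<open>W * Wi = 1\<^sub>m (Suc d)\<close> by (simp add: assoc_mult_mat_sq)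
  ultimately show ?thesis using E i by simp
qed

lemma eigenvalue_mat_diag_similar:
  fixes N :: "'a::field mat"
  assumes N: "N \<in> carrier_mat n n" and PQ: "inverse_mats n P Q"
    and D: "Q * N * P = mat_diag n \<eta>" and ev: "eigenvalue N \<mu>"
  shows "\<exists>k<n. \<eta> k = \<mu>"
proof -
  obtain w where w: "w \<in> carrier_vec n" "w \<noteq> 0\<^sub>v n" "N *\<^sub>v w = \<mu> \<cdot>\<^sub>v w"
    using ev N unfolding eigenvalue_def eigenvector_def by auto
  have Q: "Q \<in> carrier_mat n n" using PQ unfolding inverse_mats_def by simp
  then have Qw: "Q *\<^sub>v w \<in> carrier_vec n" using w by simp
  have "Q *\<^sub>v w \<noteq> 0\<^sub>v n" using inverse_mats_mult_vec_eq_0[OF PQ w(1)] w(2) by blast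
  then obtain k where k: "k < n" "(Q *\<^sub>v w) $ k \<noteq> 0" using nonzero_vec_index[OF Qw] by blast
  have "mat_diag n \<eta> *\<^sub>v (Q *\<^sub>v w) = \<mu> \<cdot>\<^sub>v (Q *\<^sub>v w)"
    using inverse_mats_conj_mult_vec[OF PQ N w(1)] D w(3) Q w(1) by (simp add: mult_mat_vec)
  then have "(mat_diag n \<eta> *\<^sub>v (Q *\<^sub>v w)) $ k = (\<mu> \<cdot>\<^sub>v (Q *\<^sub>v w)) $ k" by simp
  then have "\<eta> k * (Q *\<^sub>v w) $ k = \<mu> * (Q *\<^sub>v w) $ k"
    using mat_diag_mult_vec_index[OF Qw k(1)] Q k(1) by simp
  then show ?thesis using k by auto
qed

lemma prim_idem_diagonalizing_basis:
  fixes N :: "'a::field mat"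
  assumes N: "N \<in> carrier_mat (Suc d) (Suc d)" and \<theta>: "inj_on \<theta> {..d}"
    and ev: "\<forall>i\<le>d. eigenvalue N (\<theta> i)"
    and PQ: "inverse_mats (Suc d) P Q" and D: "diagonal_mat (Q * N * P)"
  obtains \<eta> \<sigma> where "Q * N * P = mat_diag (Suc d) \<eta>" and "bij_betw \<sigma> {..d} {..d}"
    and "\<forall>j\<le>d. \<eta> (\<sigma> j) = \<theta> j"
    and "\<forall>j\<le>d. prim_idem d N \<theta> j = P * diag_unit (Suc d) (\<sigma> j) * Q"
proof -
  have P: "P \<in> carrier_mat (Suc d) (Suc d)" and Q: "Q \<in> carrier_mat (Suc d) (Suc d)"
    and PQ1: "P * Q = 1\<^sub>m (Suc d)" using PQ unfolding inverse_mats_def by auto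
  define \<eta> where "\<eta> k = (Q * N * P) $$ (k,k)" for k
  have QNP: "Q * N * P = mat_diag (Suc d) \<eta>"
    using D P Q N by (intro eq_matI) (auto simp: diagonal_mat_def mat_diag_def \<eta>_def)
  have NP: "N * P = P * mat_diag (Suc d) \<eta>"
  proof -
    have "P * mat_diag (Suc d) \<eta> = (P * Q) * N * P"
      unfolding QNP[symmetric] using P Q N by (simp add: assoc_mult_mat_sq)
    then show ?thesis using PQ1 N by simp
  qed
  have "\<exists>k\<le>d. \<eta> k = \<theta> j" if "j \<le> d" for j
    using eigenvalue_mat_diag_similar[OF N PQ QNP] ev that by (auto simp: less_Suc_eq_le)
  then obtain \<sigma> where \<sigma>: "\<forall>j\<le>d. \<sigma> j \<le> d \<and> \<eta> (\<sigma> j) = \<theta> j" by metis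
  have "inj_on \<sigma> {..d}"
  proof (rule inj_onI)
    fix a b assume "a \<in> {..d}" "b \<in> {..d}" "\<sigma> a = \<sigma> b"
    then have "\<theta> a = \<theta> b" using \<sigma> by (metis atMost_iff)
    from inj_onD[OF \<theta> this \<open>a \<in> {..d}\<close> \<open>b \<in> {..d}\<close>] show "a = b" .
  qed
  moreover have "\<sigma> ` {..d} \<subseteq> {..d}" using \<sigma> by auto
  ultimately have bij: "bij_betw \<sigma> {..d} {..d}"
    by (simp add: bij_betw_def endo_inj_surj)
  have "prim_idem d N \<theta> j = P * diag_unit (Suc d) (\<sigma> j) * Q" if j: "j \<le> d" for j
  proof -
    have "prim_idem d N \<theta> j * P = P * diag_unit (Suc d) (\<sigma> j)"
      using prim_idem_mult_eigenbasis[OF N P \<theta> bij NP _ j] \<sigma> by blast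
    moreover have "prim_idem d N \<theta> j = prim_idem d N \<theta> j * P * Q"
      using P Q PQ1 prim_idem_carrier[OF N, of \<theta> j] by (simp add: assoc_mult_mat_sq)
    ultimately show ?thesis by simp
  qed
  then show thesis using that QNP bij \<sigma> by blast
qed

text \<open>\<open>Z i j\<close> stands for the vanishing of the \<open>(i,j)\<close> entry; diagonal positions are unconstrained.\<close>

definition tridiagonal_pattern :: "nat \<Rightarrow> (nat \<Rightarrow> nat \<Rightarrow> bool) \<Rightarrow> bool" where
  "tridiagonal_pattern d Z \<longleftrightarrow> (\<forall>i\<le>d. \<forall>j\<le>d.
     ((i > j + 1 \<or> j > i + 1) \<longrightarrow> Z i j) \<and> ((i = j + 1 \<or> j = i + 1) \<longrightarrow> \<not> Z i j))"

definition identity_or_reversal :: "nat \<Rightarrow> (nat \<Rightarrow> nat) \<Rightarrow> bool" where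
  "identity_or_reversal d \<sigma> \<longleftrightarrow> (\<forall>j\<le>d. \<sigma> j = j) \<or> (\<forall>j\<le>d. \<sigma> j = d - j)"

lemma irred_tridiagonal_iff_pattern:
  assumes "B \<in> carrier_mat (Suc d) (Suc d)"
  shows "irred_tridiagonal B \<longleftrightarrow> tridiagonal_pattern d (\<lambda>i j. B $$ (i,j) = 0)"
  using assms unfolding irred_tridiagonal_def tridiagonal_def tridiagonal_pattern_def
  by (auto simp: less_Suc_eq_le)

lemma leonard_system_iff_patterns:
  "leonard_system d A As E Es \<longleftrightarrow>
     tridiagonal_pattern d (\<lambda>i j. Es i * A * Es j = 0\<^sub>m (Suc d) (Suc d)) \<and>
     tridiagonal_pattern d (\<lambda>i j. E i * As * E j = 0\<^sub>m (Suc d) (Suc d))"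
  unfolding leonard_system_def tridiagonal_pattern_def by blast

lemma tridiagonal_pattern_cong:
  assumes "\<And>i j. i \<le> d \<Longrightarrow> j \<le> d \<Longrightarrow> Z i j \<longleftrightarrow> Z' i j"
  shows "tridiagonal_pattern d Z \<longleftrightarrow> tridiagonal_pattern d Z'"
  using assms unfolding tridiagonal_pattern_def by auto

lemma tridiagonal_pattern_reverse:
  assumes "tridiagonal_pattern d Z"
  shows "tridiagonal_pattern d (\<lambda>i j. Z (d - i) (d - j))"
  unfolding tridiagonal_pattern_def
proof (intro allI impI)
  fix i j assume "i \<le> d" "j \<le> d"
  then have "((d - i > d - j + 1 \<or> d - j > d - i + 1) \<longrightarrow> Z (d - i) (d - j)) \<and>
      ((d - i = d - j + 1 \<or> d - j = d - i + 1) \<longrightarrow> \<not> Z (d - i) (d - j))"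
    using assms[unfolded tridiagonal_pattern_def, rule_format, of "d - i" "d - j"] by simp
  moreover have "(d - i > d - j + 1 \<or> d - j > d - i + 1) \<longleftrightarrow> (i > j + 1 \<or> j > i + 1)"
    and "(d - i = d - j + 1 \<or> d - j = d - i + 1) \<longleftrightarrow> (i = j + 1 \<or> j = i + 1)"
    using \<open>i \<le> d\<close> \<open>j \<le> d\<close> by arith+
  ultimately show "((i > j + 1 \<or> j > i + 1) \<longrightarrow> Z (d - i) (d - j)) \<and>
      ((i = j + 1 \<or> j = i + 1) \<longrightarrow> \<not> Z (d - i) (d - j))"
    by blast
qed

lemma tridiagonal_pattern_reindex:
  assumes "identity_or_reversal d \<sigma>"
  shows "tridiagonal_pattern d (\<lambda>i j. Z (\<sigma> i) (\<sigma> j)) \<longleftrightarrow> tridiagonal_pattern d Z"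
  using assms unfolding identity_or_reversal_def
proof
  assume "\<forall>j\<le>d. \<sigma> j = j"
  then show ?thesis by (intro tridiagonal_pattern_cong) simp
next
  assume \<sigma>: "\<forall>j\<le>d. \<sigma> j = d - j"
  have "tridiagonal_pattern d (\<lambda>i j. Z (\<sigma> i) (\<sigma> j)) \<longleftrightarrow> tridiagonal_pattern d (\<lambda>i j. Z (d - i) (d - j))"
    using \<sigma> by (intro tridiagonal_pattern_cong) simp
  also have "\<dots> \<longleftrightarrow> tridiagonal_pattern d Z"
  proof
    assume "tridiagonal_pattern d (\<lambda>i j. Z (d - i) (d - j))"
    from tridiagonal_pattern_reverse[OF this]
    show "tridiagonal_pattern d Z" by (subst (asm) tridiagonal_pattern_cong) simp_all
  qed (rule tridiagonal_pattern_reverse)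
  finally show ?thesis .
qed

lemma identity_or_reversal_le: "identity_or_reversal d \<sigma> \<Longrightarrow> j \<le> d \<Longrightarrow> \<sigma> j \<le> d"
  unfolding identity_or_reversal_def by auto

lemma identity_or_reversal_inj_on: "identity_or_reversal d \<sigma> \<Longrightarrow> inj_on \<sigma> {..d}"
  unfolding identity_or_reversal_def inj_on_def by auto

lemma diag_unit_sandwich_eq_0_iff:
  fixes X :: "'a::comm_ring_1 mat"
  assumes PQ: "inverse_mats n P Q" and X: "X \<in> carrier_mat n n" and i: "i < n" and j: "j < n"
  shows "P * diag_unit n i * Q * X * (P * diag_unit n j * Q) = 0\<^sub>m n n \<longleftrightarrow> (Q * X * P) $$ (i,j) = 0"
proof -
  have P: "P \<in> carrier_mat n n" and Q: "Q \<in> carrier_mat n n" and "Q * P = 1\<^sub>m n"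
    using PQ unfolding inverse_mats_def by auto
  define C where "C = diag_unit n i * (Q * X * P) * diag_unit n j"
  have D: "(diag_unit n k :: 'a mat) \<in> carrier_mat n n" for k by (simp add: diag_unit_def)
  have QXP: "Q * X * P \<in> carrier_mat n n" using mult_carrier_mat[OF mult_carrier_mat[OF Q X] P] .
  have C: "C \<in> carrier_mat n n" unfolding C_def using mult_carrier_mat[OF mult_carrier_mat[OF D QXP] D] .
  have "P * diag_unit n i * Q * X * (P * diag_unit n j * Q) = P * C * Q"
    using P Q X D[of i] D[of j] by (simp add: C_def assoc_mult_mat_sq)
  moreover have "Q * (P * C * Q) * P = C"
  proof -
    have "Q * (P * C * Q) * P = (Q * P) * C * (Q * P)" using P Q C by (simp add: assoc_mult_mat_sq)
    then show ?thesis using C \<open>Q * P = 1\<^sub>m n\<close> by simp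
  qed
  moreover have "C = 0\<^sub>m n n \<longleftrightarrow> (Q * X * P) $$ (i,j) = 0"
  proof -
    have "diag_unit n i * (Q * X * P) = mat n n (\<lambda>(k,l). (if k = i then 1 else 0) * (Q * X * P) $$ (k,l))"
      unfolding diag_unit_def by (rule mat_diag_mult_left[OF QXP])
    then have "C = mat n n (\<lambda>(k,l). if k = i \<and> l = j then (Q * X * P) $$ (i,j) else 0)"
      unfolding C_def diag_unit_def by (subst mat_diag_mult_right[of _ n]) (auto intro!: eq_matI)
    then show ?thesis using i j by (auto simp: eq_matI dest!: arg_cong[of _ _ "\<lambda>M. M $$ (i,j)"])
  qed
  ultimately show ?thesis using P Q by auto
qed

lemma tridiagonal_pattern_conj_diag_unit_iff:
  fixes X :: "'a::comm_ring_1 mat"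
  assumes PQ: "inverse_mats (Suc d) P Q" and X: "X \<in> carrier_mat (Suc d) (Suc d)"
    and F: "\<forall>j\<le>d. F j = P * diag_unit (Suc d) (\<sigma> j) * Q" and \<sigma>: "identity_or_reversal d \<sigma>"
  shows "tridiagonal_pattern d (\<lambda>i j. F i * X * F j = 0\<^sub>m (Suc d) (Suc d)) \<longleftrightarrow>
    irred_tridiagonal (Q * X * P)"
proof -
  have "tridiagonal_pattern d (\<lambda>i j. F i * X * F j = 0\<^sub>m (Suc d) (Suc d)) \<longleftrightarrow>
      tridiagonal_pattern d (\<lambda>i j. (Q * X * P) $$ (\<sigma> i, \<sigma> j) = 0)"
    using F diag_unit_sandwich_eq_0_iff[OF PQ X] identity_or_reversal_le[OF \<sigma>]
    by (intro tridiagonal_pattern_cong) (simp add: less_Suc_eq_le)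
  also have "\<dots> \<longleftrightarrow> irred_tridiagonal (Q * X * P)"
  proof -
    have "P \<in> carrier_mat (Suc d) (Suc d)" "Q \<in> carrier_mat (Suc d) (Suc d)"
      using PQ unfolding inverse_mats_def by auto
    then have "Q * X * P \<in> carrier_mat (Suc d) (Suc d)" using X by simp
    then show ?thesis
      using tridiagonal_pattern_reindex[OF \<sigma>, of "\<lambda>k l. (Q * X * P) $$ (k,l) = 0"]
      by (simp add: irred_tridiagonal_iff_pattern)
  qed
  finally show ?thesis .
qed

section \<open>Supports of a flag under an irreducible tridiagonal matrix\<close>

lemma mat_diag_chain_support:
  fixes y :: "nat \<Rightarrow> 'a::field vec"
  assumes \<sigma>: "bij_betw \<sigma> {..d} {..d}" and \<eta>: "\<forall>j\<le>d. \<eta> (\<sigma> j) = \<theta> j" and \<theta>: "inj_on \<theta> {..d}"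
    and y: "\<forall>i\<le>d. y i \<in> carrier_vec (Suc d)"
    and y0: "(mat_diag (Suc d) \<eta> - \<theta> 0 \<cdot>\<^sub>m 1\<^sub>m (Suc d)) *\<^sub>v y 0 = 0\<^sub>v (Suc d)"
    and ys: "\<forall>i<d. \<exists>b. (mat_diag (Suc d) \<eta> - \<theta> (Suc i) \<cdot>\<^sub>m 1\<^sub>m (Suc d)) *\<^sub>v y (Suc i) = b \<cdot>\<^sub>v y i"
  shows "\<forall>i\<le>d. \<forall>k\<le>d. y i $ k \<noteq> 0 \<longrightarrow> k \<in> \<sigma> ` {..i}"
proof -
  have \<eta>\<theta>: "\<eta> k \<noteq> \<theta> i" if "i \<le> d" "k \<le> d" "k \<notin> \<sigma> ` {..i}" for i k
  proof -
    obtain j where j: "j \<le> d" "k = \<sigma> j" using \<sigma> \<open>k \<le> d\<close> unfolding bij_betw_def by force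
    then have "j \<noteq> i" using that by auto
    then show ?thesis using j \<eta> inj_onD[OF \<theta>, of j i] \<open>i \<le> d\<close> by auto
  qed
  have entry: "((mat_diag (Suc d) \<eta> - t \<cdot>\<^sub>m 1\<^sub>m (Suc d)) *\<^sub>v y i) $ k = (\<eta> k - t) * y i $ k"
    if "i \<le> d" "k \<le> d" for i k t
    using mat_diag_mult_vec_index[of "y i" "Suc d" k] y that by (simp add: mat_diag_shift)
  have "\<forall>k\<le>d. k \<notin> \<sigma> ` {..i} \<longrightarrow> y i $ k = 0" if "i \<le> d" for i
    using that
  proof (induction i)
    case 0
    show ?case
    proof (intro allI impI)
      fix k assume k: "k \<le> d" "k \<notin> \<sigma> ` {..0}"
      have "(\<eta> k - \<theta> 0) * y 0 $ k = 0" using entry[of 0 k "\<theta> 0"] y0 k by simp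
      then show "y 0 $ k = 0" using \<eta>\<theta>[of 0 k] k by simp
    qed
  next
    case (Suc i)
    from Suc.prems have "i < d" by simp
    then obtain b where b: "(mat_diag (Suc d) \<eta> - \<theta> (Suc i) \<cdot>\<^sub>m 1\<^sub>m (Suc d)) *\<^sub>v y (Suc i) = b \<cdot>\<^sub>v y i"
      using ys by blast
    show ?case
    proof (intro allI impI)
      fix k assume k: "k \<le> d" "k \<notin> \<sigma> ` {..Suc i}"
      then have "y i $ k = 0" using Suc by auto
      moreover have "y i \<in> carrier_vec (Suc d)" using y Suc.prems by simp
      ultimately have "(\<eta> k - \<theta> (Suc i)) * y (Suc i) $ k = 0"
        using entry[of "Suc i" k "\<theta> (Suc i)"] b k Suc.prems by simp
      then show "y (Suc i) $ k = 0" using \<eta>\<theta>[of "Suc i" k] k Suc.prems by simp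
    qed
  qed
  then show ?thesis by blast
qed

lemma irred_tridiagonal_flag_start:
  fixes T :: "'a::field mat" and y :: "nat \<Rightarrow> 'a vec"
  assumes T: "T \<in> carrier_mat (Suc d) (Suc d)" "irred_tridiagonal T"
    and \<sigma>0: "\<sigma> 0 \<le> d" and y: "\<forall>i\<le>d. y i \<in> carrier_vec (Suc d)" and y0: "y 0 $ \<sigma> 0 \<noteq> 0"
    and supp: "\<forall>i\<le>d. \<forall>k\<le>d. y i $ k \<noteq> 0 \<longrightarrow> k \<in> \<sigma> ` {..i}"
    and step: "\<forall>i<d. \<exists>c. c \<noteq> 0 \<and> y (Suc i) = c \<cdot>\<^sub>v ((T - t i \<cdot>\<^sub>m 1\<^sub>m (Suc d)) *\<^sub>v y i)"
  shows "\<sigma> 0 = 0 \<or> \<sigma> 0 = d"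
proof (rule ccontr)
  define s where "s = \<sigma> 0"
  assume "\<not> (\<sigma> 0 = 0 \<or> \<sigma> 0 = d)"
  with \<sigma>0 have s: "0 < s" "s < d" by (auto simp: s_def)
  \<comment> \<open>\<open>y 1\<close> would be nonzero at both neighbours of \<open>s\<close>, which cannot both lie in \<open>\<sigma> ` {0, 1}\<close>.\<close>
  obtain c where c: "c \<noteq> 0" "y 1 = c \<cdot>\<^sub>v ((T - t 0 \<cdot>\<^sub>m 1\<^sub>m (Suc d)) *\<^sub>v y 0)"
    using step s by auto
  have y0_single: "y 0 $ k = 0" if "k \<le> d" "k \<noteq> s" for k
    using supp that by (auto simp: s_def)
  have "y 1 $ k \<noteq> 0" if k: "k = s - 1 \<or> k = s + 1" for k
  proof -
    have pat: "tridiagonal_pattern d (\<lambda>a b. T $$ (a,b) = 0)"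
      using T irred_tridiagonal_iff_pattern by blast
    have "((T - t 0 \<cdot>\<^sub>m 1\<^sub>m (Suc d)) *\<^sub>v y 0) $ k = T $$ (k,s) * y 0 $ s"
      using y0_single y k s by (intro shift_mult_vec_index_single[OF T(1)]) auto
    moreover have "k \<le> d" "s \<le> d" "k = s + 1 \<or> s = k + 1" using k s by auto
    then have "T $$ (k,s) \<noteq> 0" using pat unfolding tridiagonal_pattern_def by blast
    moreover have "k < Suc d" using k s by auto
    ultimately show ?thesis using c y0 y by (simp add: s_def)
  qed
  then have "s - 1 \<in> \<sigma> ` {..1}" "s + 1 \<in> \<sigma> ` {..1}" using supp s by auto
  moreover have "\<sigma> ` {..1} = {s, \<sigma> 1}" by (auto simp: s_def le_Suc_eq)
  ultimately show False using s by auto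
qed

lemma irred_tridiagonal_flag_step:
  fixes T :: "'a::field mat" and y :: "'a vec"
  assumes T: "T \<in> carrier_mat (Suc d) (Suc d)" "irred_tridiagonal T"
    and \<rho>: "identity_or_reversal d \<rho>" and i: "i < d" and y: "y \<in> carrier_vec (Suc d)"
    and supp: "\<forall>l\<le>d. y $ l \<noteq> 0 \<longrightarrow> l \<in> \<rho> ` {..i}" and yi: "y $ \<rho> i \<noteq> 0"
  shows "((T - t \<cdot>\<^sub>m 1\<^sub>m (Suc d)) *\<^sub>v y) $ \<rho> (Suc i) \<noteq> 0"
proof -
  have pat: "tridiagonal_pattern d (\<lambda>a b. T $$ (\<rho> a, \<rho> b) = 0)"
    using tridiagonal_pattern_reindex[OF \<rho>, of "\<lambda>k l. T $$ (k,l) = 0"] T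
    by (simp add: irred_tridiagonal_iff_pattern)
  have \<rho>d: "\<rho> j \<le> d" if "j \<le> d" for j using identity_or_reversal_le[OF \<rho> that] .
  have \<rho>inj: "inj_on \<rho> {..d}" using identity_or_reversal_inj_on[OF \<rho>] .
  have "((T - t \<cdot>\<^sub>m 1\<^sub>m (Suc d)) *\<^sub>v y) $ \<rho> (Suc i) = T $$ (\<rho> (Suc i), \<rho> i) * y $ \<rho> i"
  proof (rule shift_mult_vec_index_single[OF T(1) y])
    have "\<rho> (Suc i) \<notin> \<rho> ` {..i}"
    proof
      assume "\<rho> (Suc i) \<in> \<rho> ` {..i}"
      then obtain j where "j \<le> i" "\<rho> (Suc i) = \<rho> j" by auto
      then show False using inj_onD[OF \<rho>inj, of "Suc i" j] i by auto
    qed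
    then show "y $ \<rho> (Suc i) = 0" using supp \<rho>d i by (meson Suc_leI)
    show "\<forall>l<Suc d. l \<noteq> \<rho> i \<longrightarrow> T $$ (\<rho> (Suc i), l) * y $ l = 0"
    proof (intro allI impI)
      fix l assume l: "l < Suc d" "l \<noteq> \<rho> i"
      show "T $$ (\<rho> (Suc i), l) * y $ l = 0"
      proof (cases "y $ l = 0")
        case False
        then have "l \<in> \<rho> ` {..i}" using supp l(1) by simp
        then obtain j where "j \<le> i" "l = \<rho> j" by auto
        moreover from this have "j \<noteq> i" using l by auto
        ultimately have "j < i" "l = \<rho> j" by simp_all
        then have "T $$ (\<rho> (Suc i), l) = 0"
          using pat i unfolding tridiagonal_pattern_def by auto
        then show ?thesis by simp
      qed simp
    qed
  qed (use i \<rho>d[of i] \<rho>d[of "Suc i"] in auto)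
  moreover have "T $$ (\<rho> (Suc i), \<rho> i) \<noteq> 0"
    using pat[unfolded tridiagonal_pattern_def, rule_format, of "Suc i" i] i by simp
  ultimately show ?thesis using yi by simp
qed

lemma irred_tridiagonal_flag_follows:
  fixes T :: "'a::field mat" and y :: "nat \<Rightarrow> 'a vec"
  assumes T: "T \<in> carrier_mat (Suc d) (Suc d)" "irred_tridiagonal T"
    and \<rho>: "identity_or_reversal d \<rho>" and start: "\<sigma> 0 = \<rho> 0"
    and y: "\<forall>i\<le>d. y i \<in> carrier_vec (Suc d)" and y0: "y 0 $ \<sigma> 0 \<noteq> 0"
    and supp: "\<forall>i\<le>d. \<forall>k\<le>d. y i $ k \<noteq> 0 \<longrightarrow> k \<in> \<sigma> ` {..i}"
    and step: "\<forall>i<d. \<exists>c. c \<noteq> 0 \<and> y (Suc i) = c \<cdot>\<^sub>v ((T - t i \<cdot>\<^sub>m 1\<^sub>m (Suc d)) *\<^sub>v y i)"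
  shows "\<forall>j\<le>d. \<sigma> j = \<rho> j"
proof -
  have "(\<forall>j\<le>i. \<sigma> j = \<rho> j) \<and> y i $ \<rho> i \<noteq> 0" if "i \<le> d" for i
    using that
  proof (induction i)
    case 0
    then show ?case using start y0 by simp
  next
    case (Suc i)
    have IH: "\<forall>j\<le>i. \<sigma> j = \<rho> j" "y i $ \<rho> i \<noteq> 0" and i: "i < d" using Suc by auto
    obtain c where c: "c \<noteq> 0" "y (Suc i) = c \<cdot>\<^sub>v ((T - t i \<cdot>\<^sub>m 1\<^sub>m (Suc d)) *\<^sub>v y i)"
      using step i by blast
    have "\<sigma> ` {..i} = \<rho> ` {..i}" using IH(1) by (auto intro: image_cong)
    then have "\<forall>l\<le>d. y i $ l \<noteq> 0 \<longrightarrow> l \<in> \<rho> ` {..i}" using supp i by auto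
    from irred_tridiagonal_flag_step[OF T \<rho> i _ this IH(2)]
    have ynz: "y (Suc i) $ \<rho> (Suc i) \<noteq> 0"
      using c y i identity_or_reversal_le[OF \<rho> Suc.prems] by simp
    then obtain j where j: "j \<le> Suc i" "\<rho> (Suc i) = \<sigma> j"
      using supp Suc.prems identity_or_reversal_le[OF \<rho> Suc.prems] by blast
    have "j = Suc i"
    proof (rule ccontr)
      assume "j \<noteq> Suc i"
      then have "\<rho> (Suc i) = \<rho> j" using j IH(1) by auto
      then show False
        using inj_onD[OF identity_or_reversal_inj_on[OF \<rho>]] \<open>j \<noteq> Suc i\<close> j Suc.prems by auto
    qed
    then show ?case using IH j ynz by (auto simp: le_Suc_eq)
  qed
  then show ?thesis by blast
qed

lemma irred_tridiagonal_flag_identity_or_reversal: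
  fixes T :: "'a::field mat" and y :: "nat \<Rightarrow> 'a vec"
  assumes T: "T \<in> carrier_mat (Suc d) (Suc d)" "irred_tridiagonal T" and \<sigma>: "\<forall>j\<le>d. \<sigma> j \<le> d"
    and y: "\<forall>i\<le>d. y i \<in> carrier_vec (Suc d)" and y0: "y 0 \<noteq> 0\<^sub>v (Suc d)"
    and supp: "\<forall>i\<le>d. \<forall>k\<le>d. y i $ k \<noteq> 0 \<longrightarrow> k \<in> \<sigma> ` {..i}"
    and step: "\<forall>i<d. \<exists>c. c \<noteq> 0 \<and> y (Suc i) = c \<cdot>\<^sub>v ((T - t i \<cdot>\<^sub>m 1\<^sub>m (Suc d)) *\<^sub>v y i)"
  shows "identity_or_reversal d \<sigma>"
proof -
  obtain k where "k < Suc d" "y 0 $ k \<noteq> 0" using nonzero_vec_index y y0 by blast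
  moreover from this have "k \<in> \<sigma> ` {..0}" using supp[rule_format, of 0 k] by simp
  ultimately have y0\<sigma>: "y 0 $ \<sigma> 0 \<noteq> 0" by simp
  have "\<sigma> 0 = 0 \<or> \<sigma> 0 = d"
    using irred_tridiagonal_flag_start[OF T _ y y0\<sigma> supp step] \<sigma> by simp
  then obtain \<rho> where \<rho>: "identity_or_reversal d \<rho>" and start: "\<sigma> 0 = \<rho> 0"
  proof
    assume "\<sigma> 0 = 0"
    then show thesis using that[of "\<lambda>j. j"] by (simp add: identity_or_reversal_def)
  next
    assume "\<sigma> 0 = d"
    then show thesis using that[of "\<lambda>j. d - j"] by (simp add: identity_or_reversal_def)
  qed
  have "\<forall>j\<le>d. \<sigma> j = \<rho> j"
    by (rule irred_tridiagonal_flag_follows[OF T \<rho> start y y0\<sigma> supp step])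
  then show ?thesis using \<rho> unfolding identity_or_reversal_def by auto
qed

section \<open>Split decompositions\<close>

text \<open>
  \<open>u i\<close> spans the line \<open>U i\<close> of a split decomposition; only these relations between the lines
  are needed, not that their sum is direct.
\<close>

definition split_vectors ::
  "nat \<Rightarrow> 'a::field mat \<Rightarrow> 'a mat \<Rightarrow> (nat \<Rightarrow> 'a) \<Rightarrow> (nat \<Rightarrow> 'a) \<Rightarrow> (nat \<Rightarrow> 'a vec) \<Rightarrow> bool" where
  "split_vectors d A As \<theta> \<theta>s u \<longleftrightarrow>
     (\<forall>i\<le>d. u i \<in> carrier_vec (Suc d) \<and> u i \<noteq> 0\<^sub>v (Suc d)) \<and>
     (\<forall>i<d. \<exists>c. u (Suc i) = c \<cdot>\<^sub>v ((A - \<theta> i \<cdot>\<^sub>m 1\<^sub>m (Suc d)) *\<^sub>v u i)) \<and>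
     (A - \<theta> d \<cdot>\<^sub>m 1\<^sub>m (Suc d)) *\<^sub>v u d = 0\<^sub>v (Suc d) \<and>
     (\<forall>i<d. \<exists>c. u i = c \<cdot>\<^sub>v ((As - \<theta>s (Suc i) \<cdot>\<^sub>m 1\<^sub>m (Suc d)) *\<^sub>v u (Suc i))) \<and>
     (As - \<theta>s 0 \<cdot>\<^sub>m 1\<^sub>m (Suc d)) *\<^sub>v u 0 = 0\<^sub>v (Suc d)"

lemma split_decomposition_split_vectors:
  fixes A As :: "'a::field mat"
  assumes A: "A \<in> carrier_mat (Suc d) (Suc d)" and As: "As \<in> carrier_mat (Suc d) (Suc d)"
    and sp: "split_decomposition d A As \<theta> \<theta>s U"
  obtains u where "split_vectors d A As \<theta> \<theta>s u"
proof -
  have "\<forall>i\<in>{..d}. \<exists>u. u \<in> carrier_vec (Suc d) \<and> u \<noteq> 0\<^sub>v (Suc d) \<and> U i = {c \<cdot>\<^sub>v u | c. True}"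
    using sp unfolding split_decomposition_def is_decomposition_def by auto
  then obtain u where u: "\<forall>i\<le>d. u i \<in> carrier_vec (Suc d) \<and> u i \<noteq> 0\<^sub>v (Suc d) \<and> U i = {c \<cdot>\<^sub>v u i | c. True}"
    by (metis atMost_iff)
  have in_U: "u i \<in> U i" if "i \<le> d" for i
    using u that by (auto intro!: exI[of _ 1])
  have image: "(\<lambda>v. (M - t \<cdot>\<^sub>m 1\<^sub>m (Suc d)) *\<^sub>v v) ` U i = range (\<lambda>c. c \<cdot>\<^sub>v ((M - t \<cdot>\<^sub>m 1\<^sub>m (Suc d)) *\<^sub>v u i))"
    if "M \<in> carrier_mat (Suc d) (Suc d)" "i \<le> d" for M t i
  proof -
    have "U i = range (\<lambda>c. c \<cdot>\<^sub>v u i)" using u that by auto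
    moreover have "(M - t \<cdot>\<^sub>m 1\<^sub>m (Suc d)) *\<^sub>v (c \<cdot>\<^sub>v u i) = c \<cdot>\<^sub>v ((M - t \<cdot>\<^sub>m 1\<^sub>m (Suc d)) *\<^sub>v u i)" for c
      using mult_mat_vec[of "M - t \<cdot>\<^sub>m 1\<^sub>m (Suc d)" "Suc d" "Suc d" "u i" c] u that
      by (simp add: minus_carrier_mat)
    ultimately show ?thesis by (simp add: image_image)
  qed
  have "split_vectors d A As \<theta> \<theta>s u"
    unfolding split_vectors_def
  proof (intro conjI allI impI)
    fix i assume i: "i < d"
    have "u (Suc i) \<in> U (Suc i)" using in_U i by simp
    then show "\<exists>c. u (Suc i) = c \<cdot>\<^sub>v ((A - \<theta> i \<cdot>\<^sub>m 1\<^sub>m (Suc d)) *\<^sub>v u i)"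
      using sp i image[OF A, of i "\<theta> i"] unfolding split_decomposition_def by auto
    have "u i \<in> U i" using in_U i by simp
    then show "\<exists>c. u i = c \<cdot>\<^sub>v ((As - \<theta>s (Suc i) \<cdot>\<^sub>m 1\<^sub>m (Suc d)) *\<^sub>v u (Suc i))"
      using sp i image[OF As, of "Suc i" "\<theta>s (Suc i)"] unfolding split_decomposition_def by auto
  next
    show "(A - \<theta> d \<cdot>\<^sub>m 1\<^sub>m (Suc d)) *\<^sub>v u d = 0\<^sub>v (Suc d)"
      using sp in_U[of d] unfolding split_decomposition_def by blast
    show "(As - \<theta>s 0 \<cdot>\<^sub>m 1\<^sub>m (Suc d)) *\<^sub>v u 0 = 0\<^sub>v (Suc d)"
      using sp in_U[of 0] unfolding split_decomposition_def by blast
  qed (use u in auto)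
  then show thesis using that by blast
qed

lemma split_vectors_swap:
  assumes "split_vectors d A As \<theta> \<theta>s u"
  shows "split_vectors d As A (\<lambda>i. \<theta>s (d - i)) (\<lambda>i. \<theta> (d - i)) (\<lambda>i. u (d - i))"
  unfolding split_vectors_def
proof (intro conjI allI impI)
  fix i assume i: "i < d"
  then have "d - Suc i < d" "Suc (d - Suc i) = d - i" by auto
  then show "\<exists>c. u (d - Suc i) = c \<cdot>\<^sub>v ((As - \<theta>s (d - i) \<cdot>\<^sub>m 1\<^sub>m (Suc d)) *\<^sub>v u (d - i))"
    and "\<exists>c. u (d - i) = c \<cdot>\<^sub>v ((A - \<theta> (d - Suc i) \<cdot>\<^sub>m 1\<^sub>m (Suc d)) *\<^sub>v u (d - Suc i))"
    using assms unfolding split_vectors_def by metis+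
qed (use assms in \<open>auto simp: split_vectors_def\<close>)

lemma split_vectors_relations:
  fixes A As :: "'a::field mat"
  assumes u: "split_vectors d A As \<theta> \<theta>s u" and i: "i < d"
  obtains c b where "c \<noteq> 0" and "u (Suc i) = c \<cdot>\<^sub>v ((A - \<theta> i \<cdot>\<^sub>m 1\<^sub>m (Suc d)) *\<^sub>v u i)"
    and "(As - \<theta>s (Suc i) \<cdot>\<^sub>m 1\<^sub>m (Suc d)) *\<^sub>v u (Suc i) = b \<cdot>\<^sub>v u i"
proof -
  have nz: "u i \<noteq> 0\<^sub>v (Suc d)" "u (Suc i) \<noteq> 0\<^sub>v (Suc d)" using u i unfolding split_vectors_def by auto
  obtain c where c: "u (Suc i) = c \<cdot>\<^sub>v ((A - \<theta> i \<cdot>\<^sub>m 1\<^sub>m (Suc d)) *\<^sub>v u i)"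
    using u i unfolding split_vectors_def by blast
  obtain c' where c': "u i = c' \<cdot>\<^sub>v ((As - \<theta>s (Suc i) \<cdot>\<^sub>m 1\<^sub>m (Suc d)) *\<^sub>v u (Suc i))"
    using u i unfolding split_vectors_def by blast
  have "c \<noteq> 0" using c nz(2) smult_vec_zero_left[OF shift_mult_vec_carrier] by auto
  moreover have "c' \<noteq> 0" using c' nz(1) smult_vec_zero_left[OF shift_mult_vec_carrier] by auto
  then have "(As - \<theta>s (Suc i) \<cdot>\<^sub>m 1\<^sub>m (Suc d)) *\<^sub>v u (Suc i) = (1 / c') \<cdot>\<^sub>v u i"
    using c' shift_mult_vec_carrier by (simp add: smult_smult_assoc)
  ultimately show thesis using that c by blast
qed

lemma split_vectors_identity_or_reversal:
  fixes A As P Q :: "'a::field mat"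
  assumes A: "A \<in> carrier_mat (Suc d) (Suc d)" and As: "As \<in> carrier_mat (Suc d) (Suc d)"
    and PQ: "inverse_mats (Suc d) P Q" and T: "irred_tridiagonal (Q * A * P)"
    and D: "Q * As * P = mat_diag (Suc d) \<eta>" and \<sigma>: "bij_betw \<sigma> {..d} {..d}"
    and \<eta>: "\<forall>j\<le>d. \<eta> (\<sigma> j) = \<theta>s j" and \<theta>s: "inj_on \<theta>s {..d}"
    and u: "split_vectors d A As \<theta> \<theta>s u"
  shows "identity_or_reversal d \<sigma>"
proof -
  have P: "P \<in> carrier_mat (Suc d) (Suc d)" and Q: "Q \<in> carrier_mat (Suc d) (Suc d)"
    using PQ unfolding inverse_mats_def by auto
  have uc: "u i \<in> carrier_vec (Suc d)" "u i \<noteq> 0\<^sub>v (Suc d)" if "i \<le> d" for i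
    using u that unfolding split_vectors_def by auto
  define y where "y i = Q *\<^sub>v u i" for i
  have y: "y i \<in> carrier_vec (Suc d)" "y i \<noteq> 0\<^sub>v (Suc d)" if "i \<le> d" for i
    using Q uc[OF that] inverse_mats_mult_vec_eq_0[OF PQ] by (auto simp: y_def)
  have shift: "Q *\<^sub>v ((M - t \<cdot>\<^sub>m 1\<^sub>m (Suc d)) *\<^sub>v u i) = (Q * M * P - t \<cdot>\<^sub>m 1\<^sub>m (Suc d)) *\<^sub>v y i"
    if "M \<in> carrier_mat (Suc d) (Suc d)" "i \<le> d" for M t i
    using inverse_mats_conj_shift_mult_vec[OF PQ that(1) uc(1)[OF that(2)]] by (simp add: y_def)
  have Q_smult: "Q *\<^sub>v (c \<cdot>\<^sub>v v) = c \<cdot>\<^sub>v (Q *\<^sub>v v)" if "v \<in> carrier_vec (Suc d)" for c v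
    using mult_mat_vec[OF Q that] .
  have supp: "\<forall>i\<le>d. \<forall>k\<le>d. y i $ k \<noteq> 0 \<longrightarrow> k \<in> \<sigma> ` {..i}"
  proof (rule mat_diag_chain_support[OF \<sigma> \<eta> \<theta>s])
    show "(mat_diag (Suc d) \<eta> - \<theta>s 0 \<cdot>\<^sub>m 1\<^sub>m (Suc d)) *\<^sub>v y 0 = 0\<^sub>v (Suc d)"
      using shift[OF As, of 0 "\<theta>s 0"] u Q D by (simp add: split_vectors_def mult_mat_vec_zero)
    show "\<forall>i<d. \<exists>b. (mat_diag (Suc d) \<eta> - \<theta>s (Suc i) \<cdot>\<^sub>m 1\<^sub>m (Suc d)) *\<^sub>v y (Suc i) = b \<cdot>\<^sub>v y i"
    proof (intro allI impI)
      fix i assume i: "i < d"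
      then obtain b where "(As - \<theta>s (Suc i) \<cdot>\<^sub>m 1\<^sub>m (Suc d)) *\<^sub>v u (Suc i) = b \<cdot>\<^sub>v u i"
        using split_vectors_relations[OF u] by metis
      then have "(mat_diag (Suc d) \<eta> - \<theta>s (Suc i) \<cdot>\<^sub>m 1\<^sub>m (Suc d)) *\<^sub>v y (Suc i) = b \<cdot>\<^sub>v y i"
        using shift[OF As, of "Suc i" "\<theta>s (Suc i)"] Q_smult uc i D by (simp add: y_def)
      then show "\<exists>b. (mat_diag (Suc d) \<eta> - \<theta>s (Suc i) \<cdot>\<^sub>m 1\<^sub>m (Suc d)) *\<^sub>v y (Suc i) = b \<cdot>\<^sub>v y i" ..
    qed
  qed (use y in blast)
  have step: "\<forall>i<d. \<exists>c. c \<noteq> 0 \<and> y (Suc i) = c \<cdot>\<^sub>v ((Q * A * P - \<theta> i \<cdot>\<^sub>m 1\<^sub>m (Suc d)) *\<^sub>v y i)"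
  proof (intro allI impI)
    fix i assume i: "i < d"
    then obtain c where "c \<noteq> 0" "u (Suc i) = c \<cdot>\<^sub>v ((A - \<theta> i \<cdot>\<^sub>m 1\<^sub>m (Suc d)) *\<^sub>v u i)"
      using split_vectors_relations[OF u] by metis
    moreover from this(2) have "y (Suc i) = c \<cdot>\<^sub>v ((Q * A * P - \<theta> i \<cdot>\<^sub>m 1\<^sub>m (Suc d)) *\<^sub>v y i)"
      using shift[OF A less_imp_le[OF i], of "\<theta> i"] Q_smult[OF shift_mult_vec_carrier] by (simp add: y_def)
    ultimately show "\<exists>c. c \<noteq> 0 \<and> y (Suc i) = c \<cdot>\<^sub>v ((Q * A * P - \<theta> i \<cdot>\<^sub>m 1\<^sub>m (Suc d)) *\<^sub>v y i)"
      by blast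
  qed
  have "Q * A * P \<in> carrier_mat (Suc d) (Suc d)" using Q A P by simp
  moreover have "\<forall>j\<le>d. \<sigma> j \<le> d" using \<sigma> unfolding bij_betw_def by auto
  moreover have "\<forall>i\<le>d. y i \<in> carrier_vec (Suc d)" and "y 0 \<noteq> 0\<^sub>v (Suc d)" using y by auto
  ultimately show ?thesis
    using irred_tridiagonal_flag_identity_or_reversal[OF _ T _ _ _ supp step] by simp
qed

definition tridiagonal_diagonal_basis :: "nat \<Rightarrow> 'a::field mat \<Rightarrow> 'a mat \<Rightarrow> bool" where
  "tridiagonal_diagonal_basis n A As \<longleftrightarrow>
     (\<exists>P Q. inverse_mats n P Q \<and> irred_tridiagonal (Q * A * P) \<and> diagonal_mat (Q * As * P))"

lemma leonard_pair_iff_bases: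
  "leonard_pair d A As \<longleftrightarrow>
     tridiagonal_diagonal_basis (Suc d) A As \<and> tridiagonal_diagonal_basis (Suc d) As A"
  unfolding leonard_pair_def tridiagonal_diagonal_basis_def inverse_mats_def by blast

lemma tridiagonal_diagonal_basis_iff_pattern:
  fixes A As :: "'a::field mat"
  assumes A: "A \<in> carrier_mat (Suc d) (Suc d)" and As: "As \<in> carrier_mat (Suc d) (Suc d)"
    and \<theta>s: "inj_on \<theta>s {..d}" and ev: "\<forall>i\<le>d. eigenvalue As (\<theta>s i)"
    and u: "split_vectors d A As \<theta> \<theta>s u"
  shows "tridiagonal_diagonal_basis (Suc d) A As \<longleftrightarrow>
    tridiagonal_pattern d (\<lambda>i j. prim_idem d As \<theta>s i * A * prim_idem d As \<theta>s j = 0\<^sub>m (Suc d) (Suc d))"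
    (is "_ \<longleftrightarrow> tridiagonal_pattern d (\<lambda>i j. ?E i * A * ?E j = _)")
proof
  assume "tridiagonal_diagonal_basis (Suc d) A As"
  then obtain P Q where PQ: "inverse_mats (Suc d) P Q" and T: "irred_tridiagonal (Q * A * P)"
    and diag: "diagonal_mat (Q * As * P)"
    unfolding tridiagonal_diagonal_basis_def by blast
  obtain \<eta> \<sigma> where D: "Q * As * P = mat_diag (Suc d) \<eta>" and \<sigma>: "bij_betw \<sigma> {..d} {..d}"
    and \<eta>: "\<forall>j\<le>d. \<eta> (\<sigma> j) = \<theta>s j" and E: "\<forall>j\<le>d. ?E j = P * diag_unit (Suc d) (\<sigma> j) * Q"
    by (rule prim_idem_diagonalizing_basis[OF As \<theta>s ev PQ diag])
  have "identity_or_reversal d \<sigma>"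
    by (rule split_vectors_identity_or_reversal[OF A As PQ T D \<sigma> \<eta> \<theta>s u])
  then show "tridiagonal_pattern d (\<lambda>i j. ?E i * A * ?E j = 0\<^sub>m (Suc d) (Suc d))"
    using tridiagonal_pattern_conj_diag_unit_iff[OF PQ A E] T by blast
next
  assume pattern: "tridiagonal_pattern d (\<lambda>i j. ?E i * A * ?E j = 0\<^sub>m (Suc d) (Suc d))"
  obtain W Wi where WWi: "inverse_mats (Suc d) W Wi" and AsW: "As * W = W * mat_diag (Suc d) \<theta>s"
    and E: "\<forall>i\<le>d. ?E i = W * diag_unit (Suc d) i * Wi"
    using eigenbasis_exists[OF As \<theta>s ev] by blast
  have "identity_or_reversal d (\<lambda>j. j)" by (simp add: identity_or_reversal_def)
  then have "irred_tridiagonal (Wi * A * W)"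
    using tridiagonal_pattern_conj_diag_unit_iff[OF WWi A E] pattern by blast
  moreover have "diagonal_mat (Wi * As * W)"
  proof -
    have W: "W \<in> carrier_mat (Suc d) (Suc d)" and Wi: "Wi \<in> carrier_mat (Suc d) (Suc d)"
      and "Wi * W = 1\<^sub>m (Suc d)" using WWi unfolding inverse_mats_def by auto
    have "Wi * As * W = Wi * (As * W)" using Wi As W by (simp add: assoc_mult_mat_sq)
    also have "\<dots> = (Wi * W) * mat_diag (Suc d) \<theta>s" using AsW Wi W by (simp add: assoc_mult_mat_sq)
    also have "\<dots> = mat_diag (Suc d) \<theta>s"
      using \<open>Wi * W = 1\<^sub>m (Suc d)\<close> left_mult_one_mat[OF mat_diag_dim] by simp
    finally show ?thesis by (simp add: diagonal_mat_def mat_diag_def)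
  qed
  ultimately show "tridiagonal_diagonal_basis (Suc d) A As"
    unfolding tridiagonal_diagonal_basis_def using WWi by blast
qed

lemma tridiagonal_diagonal_basis_swap_iff_pattern:
  fixes A As :: "'a::field mat"
  assumes A: "A \<in> carrier_mat (Suc d) (Suc d)" and As: "As \<in> carrier_mat (Suc d) (Suc d)"
    and \<theta>: "inj_on \<theta> {..d}" and ev: "\<forall>i\<le>d. eigenvalue A (\<theta> i)"
    and u: "split_vectors d A As \<theta> \<theta>s u"
  shows "tridiagonal_diagonal_basis (Suc d) As A \<longleftrightarrow>
    tridiagonal_pattern d (\<lambda>i j. prim_idem d A \<theta> i * As * prim_idem d A \<theta> j = 0\<^sub>m (Suc d) (Suc d))"
proof -
  let ?E = "prim_idem d A \<theta>" and ?E' = "prim_idem d A (\<lambda>i. \<theta> (d - i))"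
  have \<theta>': "inj_on (\<lambda>i. \<theta> (d - i)) {..d}" "\<forall>i\<le>d. eigenvalue A (\<theta> (d - i))"
    using inj_on_reverse[OF \<theta>] ev by auto
  have "tridiagonal_diagonal_basis (Suc d) As A \<longleftrightarrow>
      tridiagonal_pattern d (\<lambda>i j. ?E' i * As * ?E' j = 0\<^sub>m (Suc d) (Suc d))"
    using tridiagonal_diagonal_basis_iff_pattern[OF As A \<theta>' split_vectors_swap[OF u]] .
  also have "\<dots> \<longleftrightarrow> tridiagonal_pattern d (\<lambda>i j. ?E (d - i) * As * ?E (d - j) = 0\<^sub>m (Suc d) (Suc d))"
    using prim_idem_reverse[OF A \<theta> ev] by (intro tridiagonal_pattern_cong) simp
  also have "\<dots> \<longleftrightarrow> tridiagonal_pattern d (\<lambda>i j. ?E i * As * ?E j = 0\<^sub>m (Suc d) (Suc d))"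
    using tridiagonal_pattern_reindex[of d "\<lambda>i. d - i" "\<lambda>i j. ?E i * As * ?E j = 0\<^sub>m (Suc d) (Suc d)"]
    by (simp add: identity_or_reversal_def)
  finally show ?thesis .
qed

theorem lemma5p9:
  fixes d :: nat and A As :: "'a::field mat"
    and \<theta> \<theta>s :: "nat \<Rightarrow> 'a" and E Es :: "nat \<Rightarrow> 'a mat"
  assumes "A \<in> carrier_mat (Suc d) (Suc d)" and "As \<in> carrier_mat (Suc d) (Suc d)"
    and "mult_free d A" and "mult_free d As"
    and "inj_on \<theta> {..d}" and "\<forall>i\<le>d. eigenvalue A (\<theta> i)"
    and "inj_on \<theta>s {..d}" and "\<forall>i\<le>d. eigenvalue As (\<theta>s i)"
    and "\<forall>i\<le>d. E i = prim_idem d A \<theta> i"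
    and "\<forall>i\<le>d. Es i = prim_idem d As \<theta>s i"
    and "\<exists>U. split_decomposition d A As \<theta> \<theta>s U"
  shows "leonard_pair d A As \<longleftrightarrow> leonard_system d A As E Es"
proof -
  note A = assms(1) and As = assms(2)
  obtain u where u: "split_vectors d A As \<theta> \<theta>s u"
    using assms(11) split_decomposition_split_vectors[OF A As] by blast
  have "tridiagonal_diagonal_basis (Suc d) A As \<longleftrightarrow>
      tridiagonal_pattern d (\<lambda>i j. Es i * A * Es j = 0\<^sub>m (Suc d) (Suc d))"
    using tridiagonal_diagonal_basis_iff_pattern[OF A As assms(7,8) u] assms(10)
    by (metis (no_types, lifting) tridiagonal_pattern_cong)
  moreover have "tridiagonal_diagonal_basis (Suc d) As A \<longleftrightarrow>
      tridiagonal_pattern d (\<lambda>i j. E i * As * E j = 0\<^sub>m (Suc d) (Suc d))"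
    using tridiagonal_diagonal_basis_swap_iff_pattern[OF A As assms(5,6) u] assms(9)
    by (metis (no_types, lifting) tridiagonal_pattern_cong)
  ultimately show ?thesis by (simp add: leonard_pair_iff_bases leonard_system_iff_patterns)
qed

end
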